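(* Let $(b_k)_{k\ge1}$ be positive reals with $\sum_{k=1}^\infty k\,b_k=B^*<\infty$, and let $b_0>0$ be arbitrary. For every $K\ge1$, the multi-resolution LCMM with liquidity parameters $b_0,b_1,\dots,b_K$ has worst-case loss $$\sup_{\boldsymbol\theta\in\mathbb R^{\mathcal Z^*}}\ \sup_{\omega\in\Omega}\bigl[\boldsymbol\theta\cdot\boldsymbol\phi(\omega)-C(\boldsymbol\theta)+C(\mathbf 0)\bigr]\le B^*\log 2,$$ independently of $K$.
   Context: Fix an integer $K\ge1$, $N=2^K$, $\Omega=\{j/N:j=0,\dots,N-1\}$. Let $T^*$ be the complete binary tree of depth $K$ whose nodes are intervals: the root (level $0$) has $I_{\mathit{root}}=[0,1)$, and each node $z$ at level $k<K$ with $I_z=[\alpha_z,\beta_z)$ has children at level $k+1$ with intervals $[\alpha_z,\frac{\alpha_z+\beta_z}2)$ and $[\frac{\alpha_z+\beta_z}2,\beta_z)$. Let $\mathcal Z^*$ be its node set, $\mathcal Z_k$ the nodes at level $k$, $\mathrm{level}(z)$ the level of $z$, and $\mathcal Y^*=\mathcal Z^*\setminus\mathcal Z_K$. Each node $z$ indexes an interval security with payoff $\phi_z(\omega)=1\{\omega\in I_z\}$; $\boldsymbol\phi(\omega)=(\phi_z(\omega))_{z\in\mathcal Z^*}$. With liquidities $b_k>0$, set $B_\ell=\sum_{k=\ell+1}^K b_k$. For $\boldsymbol\theta\in\mathbb R^{\mathcal Z^*}$ let $C_k(\boldsymbol\theta_k)=b_k\log\sum_{z\in\mathcal Z_k}e^{\theta_z/b_k}$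 and $\tilde C(\boldsymbol\theta)=\sum_{k=0}^K C_k(\boldsymbol\theta_k)$. The constraint matrix $\mathbf A\in\mathbb R^{\mathcal Z^*\times\mathcal Y^*}$ has entries $A_{zy}=B_{\mathrm{level}(z)}$ if $z=y$, $-b_{\mathrm{level}(z)}$ if $I_z\subsetneq I_y$, and $0$ otherwise. The multi-resolution LCMM cost function is $C(\boldsymbol\theta)=\inf_{\boldsymbol\eta\in\mathbb R^{\mathcal Y^*}}\tilde C(\boldsymbol\theta+\mathbf A\boldsymbol\eta)$. *)

theory Defs
  imports "HOL-Analysis.Analysis"
begin

text \<open>Nodes of the complete binary tree of depth K are encoded as pairs (k, j):
  level k, position j < 2^k.  Node (k,j) has interval [j/2^k, (j+1)/2^k).
  The root (0,0) has [0,1); the children of (k,j) are (k+1,2j) and (k+1,2j+1),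
  whose intervals are the left and right halves of I_(k,j).\<close>

type_synonym node = "nat \<times> nat"

definition level :: "node \<Rightarrow> nat" where
  "level z = fst z"

definition alpha :: "node \<Rightarrow> real" where
  "alpha z = real (snd z) / 2 ^ fst z"

definition beta :: "node \<Rightarrow> real" where
  "beta z = (real (snd z) + 1) / 2 ^ fst z"

definition interval :: "node \<Rightarrow> real set" where
  "interval z = {alpha z..<beta z}"

definition nodes_at :: "nat \<Rightarrow> node set" where
  "nodes_at k = {(k, j) | j. j < 2 ^ k}"

definition Zstar :: "nat \<Rightarrow> node set" where
  "Zstar K = (\<Union>k\<in>{0..K}. nodes_at k)"

definition Ystar :: "nat \<Rightarrow> node set" where
  "Ystar K = Zstar K - nodes_at K"

definition Omega :: "nat \<Rightarrow> real set" where
  "Omega K = {real j / 2 ^ K | j. j < 2 ^ K}"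

definition phi :: "node \<Rightarrow> real \<Rightarrow> real" where
  "phi z \<omega> = (if \<omega> \<in> interval z then 1 else 0)"

definition Bsum :: "nat \<Rightarrow> (nat \<Rightarrow> real) \<Rightarrow> nat \<Rightarrow> real" where
  "Bsum K b l = (\<Sum>k\<in>{l+1..K}. b k)"

definition Ck :: "(nat \<Rightarrow> real) \<Rightarrow> nat \<Rightarrow> (node \<Rightarrow> real) \<Rightarrow> real" where
  "Ck b k \<theta> = b k * ln (\<Sum>z\<in>nodes_at k. exp (\<theta> z / b k))"

definition Ctilde :: "nat \<Rightarrow> (nat \<Rightarrow> real) \<Rightarrow> (node \<Rightarrow> real) \<Rightarrow> real" where
  "Ctilde K b \<theta> = (\<Sum>k\<in>{0..K}. Ck b k \<theta>)"

definition Amat :: "nat \<Rightarrow> (nat \<Rightarrow> real) \<Rightarrow> node \<Rightarrow> node \<Rightarrow> real" where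
  "Amat K b z y =
     (if z = y then Bsum K b (level z)
      else if interval z \<subset> interval y then - b (level z)
      else 0)"

definition Aapply :: "nat \<Rightarrow> (nat \<Rightarrow> real) \<Rightarrow> (node \<Rightarrow> real) \<Rightarrow> node \<Rightarrow> real" where
  "Aapply K b \<eta> z = (\<Sum>y\<in>Ystar K. Amat K b z y * \<eta> y)"

definition Ccost :: "nat \<Rightarrow> (nat \<Rightarrow> real) \<Rightarrow> (node \<Rightarrow> real) \<Rightarrow> real" where
  "Ccost K b \<theta> = (INF \<eta>\<in>{\<eta>. \<forall>y. y \<notin> Ystar K \<longrightarrow> \<eta> y = 0}.
                      Ctilde K b (\<lambda>z. \<theta> z + Aapply K b \<eta> z))"

definition payoff :: "nat \<Rightarrow> (node \<Rightarrow> real) \<Rightarrow> real \<Rightarrow> real" where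
  "payoff K \<theta> \<omega> = (\<Sum>z\<in>Zstar K. \<theta> z * phi z \<omega>)"

end

theory Submission
  imports Defs
begin

text \<open>The payoff of an outcome \<omega> is the sum, over the levels k, of the coordinate of \<theta> at
  the level-k node whose interval contains \<omega>, and each such coordinate is bounded by the
  log-sum-exp C_k(\<theta>). The constraint directions A\<eta> never change a payoff: along the path
  of \<omega> the diagonal entry B_l of a column is cancelled by the entries -b_k of the
  finer levels. Hence the payoff is at most C(\<theta>), while taking \<eta> = 0 gives
  C(0) \<le> \<Sum>_k b_k ln 2^k \<le> B* ln 2.\<close>

lemma nat_div_eq_iff:
  fixes x m i :: nat
  assumes "m > 0"
  shows "x div m = i \<longleftrightarrow> i * m \<le> x \<and> x < (i + 1) * m"
  using assms by (auto intro: div_nat_eqI simp: mult.commute dividend_less_times_div)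

lemma frac_pow2_le_iff:
  assumes "l \<le> k"
  shows "real x / 2 ^ k \<le> real y / 2 ^ l \<longleftrightarrow> x \<le> y * 2 ^ (k - l)"
proof -
  have "(2::real) ^ k = 2 ^ l * 2 ^ (k - l)"
    using assms by (simp flip: power_add)
  then have "real x / 2 ^ k \<le> real y / 2 ^ l \<longleftrightarrow> real x \<le> real (y * 2 ^ (k - l))"
    by (simp add: field_simps)
  then show ?thesis
    by linarith
qed

lemma pow2_frac_le_iff:
  assumes "l \<le> k"
  shows "real y / 2 ^ l \<le> real x / 2 ^ k \<longleftrightarrow> y * 2 ^ (k - l) \<le> x"
proof -
  have "(2::real) ^ k = 2 ^ l * 2 ^ (k - l)"
    using assms by (simp flip: power_add)
  then have "real y / 2 ^ l \<le> real x / 2 ^ k \<longleftrightarrow> real (y * 2 ^ (k - l)) \<le> real x"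
    by (simp add: field_simps)
  then show ?thesis
    by linarith
qed

lemma mem_interval_iff:
  assumes "l \<le> k"
  shows "real x / 2 ^ k \<in> interval (l, i) \<longleftrightarrow> x div 2 ^ (k - l) = i"
proof -
  have "real x / 2 ^ k \<in> interval (l, i)
      \<longleftrightarrow> real i / 2 ^ l \<le> real x / 2 ^ k \<and> \<not> real (i + 1) / 2 ^ l \<le> real x / 2 ^ k"
    by (simp add: interval_def alpha_def beta_def not_le add.commute)
  also have "\<dots> \<longleftrightarrow> i * 2 ^ (k - l) \<le> x \<and> x < (i + 1) * 2 ^ (k - l)"
    by (simp only: pow2_frac_le_iff[OF assms] not_le)
  finally show ?thesis
    by (simp add: nat_div_eq_iff)
qed

lemma interval_length: "beta z - alpha z = 1 / 2 ^ level z"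
  by (simp add: alpha_def beta_def level_def diff_divide_distrib[symmetric])

lemma alpha_in_interval: "alpha z \<in> interval z"
proof -
  have "0 < beta z - alpha z"
    unfolding interval_length by simp
  then show ?thesis
    by (simp add: interval_def)
qed

lemma interval_subset_level_le:
  assumes "interval z \<subseteq> interval y"
  shows "level y \<le> level z"
proof -
  have "alpha y \<le> alpha z" "beta z \<le> beta y"
    using assms alpha_in_interval[of z] by (auto simp: interval_def atLeastLessThan_subset_iff)
  then have "(1::real) / 2 ^ level z \<le> 1 / 2 ^ level y"
    using interval_length[of z] interval_length[of y] by linarith
  then show ?thesis
    by (simp add: power_one_over[symmetric])
qed

lemma interval_subset_iff:
  assumes "l \<le> k"
  shows "interval (k, i) \<subseteq> interval (l, i') \<longleftrightarrow> i div 2 ^ (k - l) = i'"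
proof
  assume "interval (k, i) \<subseteq> interval (l, i')"
  then have "real i / 2 ^ k \<in> interval (l, i')"
    using alpha_in_interval[of "(k, i)"] by (auto simp: alpha_def)
  then show "i div 2 ^ (k - l) = i'"
    using assms by (simp add: mem_interval_iff)
next
  assume "i div 2 ^ (k - l) = i'"
  then have "i' * 2 ^ (k - l) \<le> i" "i + 1 \<le> (i' + 1) * 2 ^ (k - l)"
    by (simp_all add: nat_div_eq_iff)
  then have "alpha (l, i') \<le> alpha (k, i)" "beta (k, i) \<le> beta (l, i')"
    using assms pow2_frac_le_iff[of l k i' i] frac_pow2_le_iff[of l k "i + 1" "i' + 1"]
    by (simp_all add: alpha_def beta_def add.commute)
  then show "interval (k, i) \<subseteq> interval (l, i')"
    by (auto simp: interval_def)
qed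

lemma interval_psubset_iff:
  "interval (k, i) \<subset> interval (l, i') \<longleftrightarrow> l < k \<and> i div 2 ^ (k - l) = i'"
proof
  assume psub: "interval (k, i) \<subset> interval (l, i')"
  then have "l \<le> k"
    using interval_subset_level_le[of "(k, i)" "(l, i')"] by (auto simp: level_def)
  moreover have "i div 2 ^ (k - l) = i'"
    using psub \<open>l \<le> k\<close> interval_subset_iff by blast
  moreover have "l \<noteq> k"
    using psub calculation by auto
  ultimately show "l < k \<and> i div 2 ^ (k - l) = i'"
    by simp
next
  assume "l < k \<and> i div 2 ^ (k - l) = i'"
  then have "interval (k, i) \<subseteq> interval (l, i')" "\<not> interval (l, i') \<subseteq> interval (k, i)"
    using interval_subset_iff[of l k i i'] interval_subset_level_le[of "(l, i')" "(k, i)"]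
    by (auto simp: level_def)
  then show "interval (k, i) \<subset> interval (l, i')"
    by blast
qed

text \<open>The level-k node whose interval contains the grid point j/2^K.\<close>
definition ancestor :: "nat \<Rightarrow> nat \<Rightarrow> nat \<Rightarrow> node" where
  "ancestor K j k = (k, j div 2 ^ (K - k))"

lemma nodes_at_eq_image: "nodes_at k = Pair k ` {..<2 ^ k}"
  unfolding nodes_at_def by auto

lemma finite_nodes_at [simp]: "finite (nodes_at k)"
  by (simp add: nodes_at_eq_image)

lemma card_nodes_at: "card (nodes_at k) = 2 ^ k"
  by (simp add: nodes_at_eq_image card_image inj_on_def)

lemma finite_Zstar [simp]: "finite (Zstar K)"
  by (simp add: Zstar_def)

lemma finite_Ystar [simp]: "finite (Ystar K)"
  by (simp add: Ystar_def)

lemma sum_Zstar: "(\<Sum>z\<in>Zstar K. g z) = (\<Sum>k\<in>{0..K}. \<Sum>z\<in>nodes_at k. g z)"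
  unfolding Zstar_def by (rule sum.UNION_disjoint) (auto simp: nodes_at_def)

lemma ancestor_in_nodes_at:
  assumes "k \<le> K" "j < 2 ^ K"
  shows "ancestor K j k \<in> nodes_at k"
proof -
  have "j < 2 ^ k * 2 ^ (K - k)"
    using assms by (simp flip: power_add)
  then show ?thesis
    by (simp add: ancestor_def nodes_at_def div_less_iff_less_mult)
qed

lemma phi_grid_point:
  assumes "z \<in> nodes_at k" "k \<le> K"
  shows "phi z (real j / 2 ^ K) = (if z = ancestor K j k then 1 else 0)"
  using assms mem_interval_iff[OF assms(2), of j]
  by (auto simp: nodes_at_def phi_def ancestor_def)

lemma sum_nodes_at_phi_grid_point:
  assumes "k \<le> K" "j < 2 ^ K"
  shows "(\<Sum>z\<in>nodes_at k. f z * phi z (real j / 2 ^ K)) = f (ancestor K j k)"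
proof -
  have "(\<Sum>z\<in>nodes_at k. f z * phi z (real j / 2 ^ K))
      = (\<Sum>z\<in>nodes_at k. if z = ancestor K j k then f z else 0)"
    using assms(1) by (intro sum.cong) (simp_all add: phi_grid_point)
  then show ?thesis
    using ancestor_in_nodes_at[OF assms] by simp
qed

lemma sum_Zstar_phi_grid_point:
  assumes "j < 2 ^ K"
  shows "(\<Sum>z\<in>Zstar K. f z * phi z (real j / 2 ^ K)) = (\<Sum>k\<in>{0..K}. f (ancestor K j k))"
  unfolding sum_Zstar using assms by (simp add: sum_nodes_at_phi_grid_point)

lemma ancestor_ancestor:
  assumes "l \<le> k" "k \<le> K"
  shows "snd (ancestor K j k) div 2 ^ (k - l) = snd (ancestor K j l)"
proof -
  have "(2::nat) ^ (K - k) * 2 ^ (k - l) = 2 ^ (K - l)"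
    using assms by (simp flip: power_add)
  then show ?thesis
    by (metis ancestor_def div_mult2_eq snd_conv)
qed

lemma Amat_ancestor:
  assumes "k \<le> K"
  shows "Amat K b (ancestor K j k) (l, i) =
    (if (l, i) = ancestor K j l then (if k = l then Bsum K b l else if l < k then - b k else 0) else 0)"
  using assms ancestor_ancestor[of l k K j]
  by (auto simp: Amat_def level_def interval_psubset_iff ancestor_def)

lemma Amat_column_weights_sum_zero:
  assumes "l \<le> K"
  shows "(\<Sum>k\<in>{0..K}. if k = l then Bsum K b l else if l < k then - b k else 0) = 0"
proof -
  have "{0..K} = {0..l} \<union> {l+1..K}"
    using assms by auto
  moreover have "(\<Sum>k\<in>{0..l}. if k = l then Bsum K b l else if l < k then - b k else 0)
      = (\<Sum>k\<in>{0..l}. if k = l then Bsum K b l else 0)"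
    by (intro sum.cong) auto
  moreover have "(\<Sum>k\<in>{l+1..K}. if k = l then Bsum K b l else if l < k then - b k else 0)
      = - Bsum K b l"
    by (simp add: Bsum_def sum_negf)
  ultimately show ?thesis
    by (simp add: sum.union_disjoint)
qed

lemma sum_Amat_column_phi:
  assumes "j < 2 ^ K" "y \<in> Ystar K"
  shows "(\<Sum>z\<in>Zstar K. Amat K b z y * phi z (real j / 2 ^ K)) = 0"
proof -
  obtain l i where y: "y = (l, i)"
    by fastforce
  have "l < K"
    using assms(2) by (auto simp: y Ystar_def Zstar_def nodes_at_def order.order_iff_strict)
  have "(\<Sum>z\<in>Zstar K. Amat K b z y * phi z (real j / 2 ^ K))
      = (\<Sum>k\<in>{0..K}. Amat K b (ancestor K j k) (l, i))"
    using assms(1) by (simp add: y sum_Zstar_phi_grid_point)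
  also have "\<dots> = (if (l, i) = ancestor K j l
      then (\<Sum>k\<in>{0..K}. if k = l then Bsum K b l else if l < k then - b k else 0) else 0)"
    by (simp add: Amat_ancestor)
  also have "\<dots> = 0"
    using \<open>l < K\<close> by (simp add: Amat_column_weights_sum_zero)
  finally show ?thesis .
qed

lemma payoff_add: "payoff K (\<lambda>z. x z + w z) \<omega> = payoff K x \<omega> + payoff K w \<omega>"
  by (simp add: payoff_def distrib_right sum.distrib)

lemma payoff_Aapply:
  assumes "\<omega> \<in> Omega K"
  shows "payoff K (Aapply K b \<eta>) \<omega> = 0"
proof -
  obtain j where j: "\<omega> = real j / 2 ^ K" "j < 2 ^ K"
    using assms by (auto simp: Omega_def)
  have "payoff K (Aapply K b \<eta>) \<omega>
      = (\<Sum>y\<in>Ystar K. \<eta> y * (\<Sum>z\<in>Zstar K. Amat K b z y * phi z \<omega>))"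
    unfolding payoff_def Aapply_def sum_distrib_left sum_distrib_right
    by (subst sum.swap) (simp add: mult_ac)
  then show ?thesis
    using sum_Amat_column_phi[OF j(2)] j(1) by simp
qed

lemma le_log_sum_exp:
  fixes x :: "'a \<Rightarrow> real"
  assumes "finite A" "z \<in> A" "c > 0"
  shows "x z \<le> c * ln (\<Sum>a\<in>A. exp (x a / c))"
proof -
  have "exp (x z / c) \<le> (\<Sum>a\<in>A. exp (x a / c))"
    using assms by (intro member_le_sum) auto
  then have "x z / c \<le> ln (\<Sum>a\<in>A. exp (x a / c))"
    by (metis exp_gt_zero ln_exp ln_le_cancel_iff order_less_le_trans)
  then show ?thesis
    using assms(3) by (simp add: pos_divide_le_eq mult.commute)
qed

lemma payoff_le_Ctilde:
  assumes "\<And>k. b k > 0" "\<omega> \<in> Omega K"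
  shows "payoff K x \<omega> \<le> Ctilde K b x"
proof -
  obtain j where j: "\<omega> = real j / 2 ^ K" "j < 2 ^ K"
    using assms(2) by (auto simp: Omega_def)
  have "payoff K x \<omega> = (\<Sum>k\<in>{0..K}. x (ancestor K j k))"
    using j by (simp add: payoff_def sum_Zstar_phi_grid_point)
  also have "\<dots> \<le> Ctilde K b x"
    unfolding Ctilde_def Ck_def
    using j(2) assms(1) by (intro sum_mono le_log_sum_exp) (auto intro: ancestor_in_nodes_at)
  finally show ?thesis .
qed

lemma payoff_le_Ctilde_translate:
  assumes "\<And>k. b k > 0" "\<omega> \<in> Omega K"
  shows "payoff K \<theta> \<omega> \<le> Ctilde K b (\<lambda>z. \<theta> z + Aapply K b \<eta> z)"
proof -
  have "payoff K \<theta> \<omega> = payoff K (\<lambda>z. \<theta> z + Aapply K b \<eta> z) \<omega>"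
    using assms(2) by (simp add: payoff_add payoff_Aapply)
  also have "\<dots> \<le> Ctilde K b (\<lambda>z. \<theta> z + Aapply K b \<eta> z)"
    using assms by (rule payoff_le_Ctilde)
  finally show ?thesis .
qed

lemma payoff_le_Ccost:
  assumes "\<And>k. b k > 0" "\<omega> \<in> Omega K"
  shows "payoff K \<theta> \<omega> \<le> Ccost K b \<theta>"
  unfolding Ccost_def using assms
  by (intro cINF_greatest payoff_le_Ctilde_translate) auto

lemma zero_in_Omega: "0 \<in> Omega K"
  unfolding Omega_def by force

lemma Aapply_zero: "Aapply K b (\<lambda>_. 0) = (\<lambda>_. 0)"
  by (simp add: Aapply_def fun_eq_iff)

lemma Ctilde_zero: "Ctilde K b (\<lambda>_. 0) = (\<Sum>k\<in>{0..K}. real k * b k) * ln 2"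
  unfolding Ctilde_def Ck_def
  by (simp add: card_nodes_at ln_realpow sum_distrib_left mult_ac)

lemma Ccost_zero_le:
  assumes "\<And>k. b k > 0"
  shows "Ccost K b (\<lambda>_. 0) \<le> (\<Sum>k\<in>{0..K}. real k * b k) * ln 2"
proof -
  let ?S = "{\<eta>. \<forall>y. y \<notin> Ystar K \<longrightarrow> \<eta> y = 0}"
  let ?f = "\<lambda>\<eta>. Ctilde K b (\<lambda>z. 0 + Aapply K b \<eta> z)"
  have "bdd_below (?f ` ?S)"
    by (rule bdd_belowI2[where m = "payoff K (\<lambda>_. 0) 0"])
      (rule payoff_le_Ctilde_translate[OF assms zero_in_Omega])
  then have "Ccost K b (\<lambda>_. 0) \<le> ?f (\<lambda>_. 0)"
    unfolding Ccost_def by (rule cINF_lower) simp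
  then show ?thesis
    by (simp add: Aapply_zero Ctilde_zero)
qed

theorem theorem4:
  fixes b :: "nat \<Rightarrow> real" and K :: nat
  assumes bpos: "\<And>k. b k > 0"
    and summ: "summable (\<lambda>k. real k * b k)"
    and K: "K \<ge> 1"
  shows "\<forall>\<theta> :: node \<Rightarrow> real. \<forall>\<omega>\<in>Omega K.
           payoff K \<theta> \<omega> - Ccost K b \<theta> + Ccost K b (\<lambda>_. 0)
             \<le> (\<Sum>k. real k * b k) * ln 2"
proof (intro allI ballI)
  fix \<theta> :: "node \<Rightarrow> real" and \<omega>
  assume "\<omega> \<in> Omega K"
  then have "payoff K \<theta> \<omega> \<le> Ccost K b \<theta>"
    using bpos by (intro payoff_le_Ccost)
  moreover have "Ccost K b (\<lambda>_. 0) \<le> (\<Sum>k\<in>{0..K}. real k * b k) * ln 2"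
    using bpos by (rule Ccost_zero_le)
  moreover have "(\<Sum>k\<in>{0..K}. real k * b k) * ln 2 \<le> (\<Sum>k. real k * b k) * ln 2"
    using summ bpos by (intro mult_right_mono sum_le_suminf) (auto intro: less_imp_le)
  ultimately show "payoff K \<theta> \<omega> - Ccost K b \<theta> + Ccost K b (\<lambda>_. 0)
      \<le> (\<Sum>k. real k * b k) * ln 2"
    by linarith
qed

end
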